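(* Let $\mathcal{X},\mathcal{Y}$ be finite sets and $n\ge1$. Let $\tilde{\Phi}_n=(\tilde{\varphi}_0,\tilde{\varphi}_2,\tilde{\psi})$ be a WAK code of blocklength $n$ with message sets $\tilde{\mathcal{M}}_0,\tilde{\mathcal{M}}_2$, and let $P_{\bar X\bar Y}\in\mathcal{P}_n(\mathcal{X}\times\mathcal{Y})$ be a joint type with $\log|\mathcal{T}^n_{\bar X}|\ge\log|\tilde{\mathcal{M}}_0|$, where $\mathcal{T}^n_{\bar X}$ is the type class of the marginal type $P_{\bar X}$. Then there exists another WAK code $\hat{\Phi}_n=(\hat{\varphi}_0,\hat{\varphi}_2,\hat{\psi})$ with message sets $\hat{\mathcal{M}}_0,\hat{\mathcal{M}}_2$ such that \begin{align*} \log|\hat{\mathcal{M}}_0| &\le \log|\tilde{\mathcal{M}}_0|+\log n+\log\log|\mathcal{X}|+2,\\ \log|\hat{\mathcal{M}}_2| &= \log|\tilde{\mathcal{M}}_2|,\\ \mathrm{P}_{\mathtt{WAK}}(\hat{\Phi}_n\mid P_{\mathcal{T}^n_{\bar X\bar Y}}) &\le \mathrm{P}_{\mathtt{WAK}}(\tilde{\Phi}_n\mid P_{\mathcal{T}^n_{\bar X\bar Y}}), \end{align*} and for every $m\in\hat{\mathcal{M}}_0$, $$\log|\hat{\varphi}_0^{-1}(m)\cap\mathcal{T}^n_{\bar X}|\le\log\frac{|\mathcal{T}^n_{\bar X}|}{|\tilde{\mathcal{M}}_0|}.$$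
   Context: All logarithms are base 2. $\mathcal{P}_n(\mathcal{X}\times\mathcal{Y})$ is the set of joint types of sequences in $\mathcal{X}^n\times\mathcal{Y}^n$; for a joint type $P_{\bar X\bar Y}$, $\mathcal{T}^n_{\bar X\bar Y}$ is its type class and $P_{\mathcal{T}^n_{\bar X\bar Y}}$ is the uniform distribution on $\mathcal{T}^n_{\bar X\bar Y}$. A WAK code of blocklength $n$ is a triple $(\tilde{\varphi}_0,\tilde{\varphi}_2,\tilde{\psi})$ of maps $\tilde{\varphi}_0:\mathcal{X}^n\to\tilde{\mathcal{M}}_0$, $\tilde{\varphi}_2:\mathcal{Y}^n\to\tilde{\mathcal{M}}_2$, $\tilde{\psi}:\tilde{\mathcal{M}}_0\times\tilde{\mathcal{M}}_2\to\mathcal{Y}^n$, with finite sets $\tilde{\mathcal{M}}_0,\tilde{\mathcal{M}}_2$. For $(X^n,Y^n)\sim P$, $\mathrm{P}_{\mathtt{WAK}}(\tilde{\Phi}_n\mid P)$ is the probability that $\tilde{\psi}(\tilde{\varphi}_0(X^n),\tilde{\varphi}_2(Y^n))\ne Y^n$. *)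

theory Defs
  imports Complex_Main
begin

definition seqs :: "nat \<Rightarrow> 'a list set" where
  "seqs n = {xs. length xs = n}"

definition joint_type :: "'x list \<Rightarrow> 'y list \<Rightarrow> ('x \<times> 'y \<Rightarrow> real)" where
  "joint_type xs ys = (\<lambda>ab. real (count_list (zip xs ys) ab) / real (length xs))"

definition joint_types :: "nat \<Rightarrow> ('x \<times> 'y \<Rightarrow> real) set" where
  "joint_types n = {joint_type xs ys | xs ys. xs \<in> seqs n \<and> ys \<in> seqs n}"

definition joint_type_class :: "nat \<Rightarrow> ('x \<times> 'y \<Rightarrow> real) \<Rightarrow> ('x list \<times> 'y list) set" where
  "joint_type_class n P = {(xs, ys). xs \<in> seqs n \<and> ys \<in> seqs n \<and> joint_type xs ys = P}"

definition marginal_x :: "('x \<times> 'y::finite \<Rightarrow> real) \<Rightarrow> ('x \<Rightarrow> real)" where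
  "marginal_x P = (\<lambda>a. \<Sum>b\<in>UNIV. P (a, b))"

definition tclass :: "nat \<Rightarrow> ('x \<Rightarrow> real) \<Rightarrow> 'x list set" where
  "tclass n Q = {xs. xs \<in> seqs n \<and> (\<forall>a. real (count_list xs a) / real n = Q a)}"

definition wak_code :: "nat \<Rightarrow> nat set \<Rightarrow> nat set \<Rightarrow> ('x list \<Rightarrow> nat) \<Rightarrow> ('y list \<Rightarrow> nat)
    \<Rightarrow> (nat \<Rightarrow> nat \<Rightarrow> 'y list) \<Rightarrow> bool" where
  "wak_code n M0 M2 phi0 phi2 psi \<longleftrightarrow>
     finite M0 \<and> finite M2 \<and>
     (\<forall>xs\<in>seqs n. phi0 xs \<in> M0) \<and> (\<forall>ys\<in>seqs n. phi2 ys \<in> M2) \<and>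
     (\<forall>m0\<in>M0. \<forall>m2\<in>M2. psi m0 m2 \<in> seqs n)"

(* Error probability of the code under the uniform distribution on a finite set S of sequence pairs. *)
definition wak_error_unif :: "('x list \<Rightarrow> nat) \<Rightarrow> ('y list \<Rightarrow> nat) \<Rightarrow> (nat \<Rightarrow> nat \<Rightarrow> 'y list)
    \<Rightarrow> ('x list \<times> 'y list) set \<Rightarrow> real" where
  "wak_error_unif phi0 phi2 psi S =
     real (card {(xs, ys) \<in> S. psi (phi0 xs) (phi2 ys) \<noteq> ys}) / real (card S)"

end

theory Submission
  imports Defs "HOL-Library.Nat_Bijection"
begin

text \<open>Keep the decoder and refine the encoder: inside the type class \<open>T\<close>, the bin
  \<open>B\<^sub>m = phi0\<^sup>-\<^sup>1(m) \<inter> T\<close> of each message \<open>m\<close> is enumerated and cut into chunks of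
  \<open>k = |T| div |M0|\<close> consecutive elements, and the chunk index is sent along with \<open>m\<close>.
  The decoder discards the chunk index, so the error is unchanged; every new bin meets \<open>T\<close> in at
  most \<open>k \<le> |T| / |M0|\<close> sequences; and there are at most
  \<open>\<Sum>\<^sub>m (|B\<^sub>m| div k + 1) \<le> |M0| + |T| div k < 3 |M0|\<close> new messages, i.e. less than two
  extra bits. The slack \<open>log n + log log |X|\<close> is nonnegative and not needed, nor is the
  hypothesis that \<open>P\<close> is a joint type.\<close>

definition rank_in :: "'a set \<Rightarrow> 'a \<Rightarrow> nat" where
  "rank_in A = (SOME g. bij_betw g A {0..<card A})"

lemma bij_betw_rank_in: "finite A \<Longrightarrow> bij_betw (rank_in A) A {0..<card A}"
  unfolding rank_in_def by (rule someI_ex[OF ex_bij_betw_finite_nat])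

definition refine_encoder :: "'a set \<Rightarrow> ('a \<Rightarrow> nat) \<Rightarrow> nat \<Rightarrow> 'a \<Rightarrow> nat" where
  "refine_encoder T f k x =
     prod_encode (f x, if x \<in> T then rank_in {y \<in> T. f y = f x} x div k else 0)"

lemma fst_prod_decode_refine_encoder [simp]:
  "fst (prod_decode (refine_encoder T f k x)) = f x"
  by (simp add: refine_encoder_def)

lemma card_le_if_inj_on_div_const:
  fixes h :: "'a \<Rightarrow> nat"
  assumes "0 < k" "inj_on h A" "\<And>x. x \<in> A \<Longrightarrow> h x div k = j"
  shows "card A \<le> k"
proof -
  have "h ` A \<subseteq> {j * k..<j * k + k}"
  proof
    fix y assume "y \<in> h ` A"
    then have "y div k = j" using assms(3) by auto
    then have "y = j * k + y mod k" using div_mult_mod_eq[of y k] by simp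
    moreover have "y mod k < k" using assms(1) by simp
    ultimately show "y \<in> {j * k..<j * k + k}" by (simp only: atLeastLessThan_iff) linarith
  qed
  then have "card (h ` A) \<le> k" using card_mono[of "{j * k..<j * k + k}"] by fastforce
  with assms(2) show ?thesis by (simp add: card_image)
qed

lemma card_refine_encoder_fiber_le:
  assumes "finite T" "0 < k"
  shows "card {x \<in> T. refine_encoder T f k x = l} \<le> k"
proof (cases "{x \<in> T. refine_encoder T f k x = l} = {}")
  case False
  then obtain x0 where x0: "x0 \<in> T" "refine_encoder T f k x0 = l" by auto
  define B where "B = {y \<in> T. f y = f x0}"
  define F where "F = {x \<in> T. refine_encoder T f k x = l}"
  have same_bin_and_chunk: "f x = f x0 \<and> rank_in B x div k = rank_in B x0 div k" if "x \<in> F" for x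
  proof -
    have "x \<in> T" "refine_encoder T f k x = l" using that by (simp_all add: F_def)
    then have "prod_encode (f x, rank_in {y \<in> T. f y = f x} x div k) = prod_encode (f x0, rank_in B x0 div k)"
      using x0 by (simp add: refine_encoder_def B_def)
    then have "(f x, rank_in {y \<in> T. f y = f x} x div k) = (f x0, rank_in B x0 div k)"
      by (simp only: prod_encode_eq)
    then obtain fx: "f x = f x0" and "rank_in {y \<in> T. f y = f x} x div k = rank_in B x0 div k"
      by (rule Pair_inject)
    then show ?thesis unfolding fx B_def by simp
  qed
  have "F \<subseteq> B" using same_bin_and_chunk by (auto simp: F_def B_def)
  moreover have "inj_on (rank_in B) B"
    using bij_betw_rank_in[of B] assms(1) by (simp add: B_def bij_betw_def)
  ultimately have "inj_on (rank_in B) F" by (rule inj_on_subset[rotated])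
  moreover have "rank_in B x div k = rank_in B x0 div k" if "x \<in> F" for x
    using same_bin_and_chunk[OF that] by simp
  ultimately have "card F \<le> k" by (rule card_le_if_inj_on_div_const[OF assms(2)])
  then show ?thesis by (simp add: F_def)
qed (simp only: card.empty le0)

lemma sum_div_le_div_sum:
  fixes a :: "'i \<Rightarrow> nat"
  shows "(\<Sum>i\<in>I. a i div k) \<le> (\<Sum>i\<in>I. a i) div k"
proof -
  have "(\<Sum>i\<in>I. a i div k) * k \<le> (\<Sum>i\<in>I. a i)"
    unfolding sum_distrib_right by (rule sum_mono) simp
  then show ?thesis
    by (cases "k = 0") (simp_all add: less_eq_div_iff_mult_less_eq)
qed

lemma card_refine_encoder_image_le:
  assumes "finite M" "f ` S \<subseteq> M" "T \<subseteq> S" "finite T"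
  shows "card (refine_encoder T f k ` S) \<le> card M + card T div k"
proof -
  define B where "B m = {y \<in> T. f y = m}" for m
  have finB: "finite (B m)" for m using assms(4) by (simp add: B_def)
  have card_T: "card T = (\<Sum>m\<in>M. card (B m))"
  proof -
    have "T = (\<Union>m\<in>M. B m)" using assms(2,3) by (auto simp: B_def)
    then show ?thesis using card_UN_disjoint[of M B] assms(1) finB by (auto simp: B_def)
  qed
  have "refine_encoder T f k ` S \<subseteq> prod_encode ` (SIGMA m:M. {..card (B m) div k})"
  proof
    fix l assume "l \<in> refine_encoder T f k ` S"
    then obtain x where x: "x \<in> S" "l = refine_encoder T f k x" by blast
    define c where "c = (if x \<in> T then rank_in (B (f x)) x div k else 0)"
    have "c \<le> card (B (f x)) div k"
    proof (cases "x \<in> T")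
      case True
      then have "rank_in (B (f x)) x < card (B (f x))"
        using bij_betw_apply[OF bij_betw_rank_in[OF finB]] by (simp add: B_def)
      then show ?thesis using True by (simp add: c_def div_le_mono less_imp_le)
    qed (simp add: c_def)
    moreover have "f x \<in> M" using x(1) assms(2) by blast
    moreover have "l = prod_encode (f x, c)" by (simp add: x(2) c_def refine_encoder_def B_def)
    ultimately show "l \<in> prod_encode ` (SIGMA m:M. {..card (B m) div k})" by blast
  qed
  then have "card (refine_encoder T f k ` S) \<le> card (prod_encode ` (SIGMA m:M. {..card (B m) div k}))"
    by (rule card_mono[rotated]) (use assms(1) in simp)
  also have "\<dots> \<le> card (SIGMA m:M. {..card (B m) div k})"
    by (rule card_image_le) (use assms(1) in simp)
  also have "\<dots> = card M + (\<Sum>m\<in>M. card (B m) div k)"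
    using assms(1) by (simp add: sum_Suc)
  also have "\<dots> \<le> card M + card T div k"
    using sum_div_le_div_sum[of "\<lambda>m. card (B m)" k M] card_T by simp
  finally show ?thesis by simp
qed

lemma div_div_less_double:
  fixes a b :: nat
  assumes "0 < b"
  shows "a div (a div b) < 2 * b"
proof (cases "b \<le> a")
  case True
  then have q: "1 \<le> a div b" using assms by (simp add: div_greater_zero_iff Suc_le_eq)
  have "a < (a div b + 1) * b" using assms by (simp add: dividend_less_div_times)
  also have "\<dots> \<le> (2 * b) * (a div b)" using q by (simp add: algebra_simps)
  finally show ?thesis using q by (simp add: div_less_iff_less_mult)
qed (use assms in simp)

lemma log2_card_refine_encoder_fiber_le:
  assumes "finite T" "0 < m" "log 2 (real m) \<le> log 2 (real (card T))"
  shows "log 2 (card {x \<in> T. refine_encoder T f (card T div m) x = l})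
           \<le> log 2 (real (card T) / real m)"
proof (cases "T = {}")
  case False
  then have "m \<le> card T" using assms by (simp add: card_gt_0_iff)
  then have k_pos: "0 < card T div m" using assms(2) by (simp add: div_greater_zero_iff)
  show ?thesis
  proof (cases "{x \<in> T. refine_encoder T f (card T div m) x = l} = {}")
    case True
    have "1 \<le> real (card T) / real m" using \<open>m \<le> card T\<close> assms(2) by simp
    then show ?thesis by (simp add: True log_def)
  next
    case False
    have "real (card {x \<in> T. refine_encoder T f (card T div m) x = l}) \<le> real (card T div m)"
      using card_refine_encoder_fiber_le[OF assms(1) k_pos] by simp
    also have "\<dots> \<le> real (card T) / real m" by (rule of_nat_div_le_of_nat)
    finally show ?thesis
      using False assms(1) by (intro log_mono) (simp_all add: card_gt_0_iff)
  qed
qed (simp add: log_def)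

lemma log2_le_log2_plus_2:
  assumes "c \<le> 4 * m" "0 < m"
  shows "log 2 (real c) \<le> log 2 (real m) + 2"
proof (cases "c = 0")
  case False
  have "real c \<le> real (4 * m)" using assms(1) by (simp only: of_nat_le_iff)
  then have "log 2 (real c) \<le> log 2 (4 * real m)" using False by simp
  also have "\<dots> = log 2 (real m) + 2"
    using assms(2) log_mult[of 2 4 "real m"] log_nat_power[of 2 2 2] by simp
  finally show ?thesis .
qed (use assms(2) in \<open>simp add: log_def\<close>)

lemma log2_log2_nonneg: "0 \<le> log 2 (log 2 (real c))"
proof (cases "c \<le> 1")
  case True
  then have "c = 0 \<or> c = 1" by auto
  then show ?thesis by (auto simp: log_def)
qed simp

lemma seqs_nonempty: "replicate n undefined \<in> seqs n"
  by (simp add: seqs_def)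

lemma finite_seqs: "finite (seqs n :: 'a::finite list set)"
  using finite_lists_length_eq[of "UNIV :: 'a set" n] by (simp add: seqs_def)

lemma wak_code_refine_encoder:
  fixes phi0 :: "'x::finite list \<Rightarrow> nat"
  assumes "wak_code n M0 M2 phi0 phi2 psi"
  shows "wak_code n (refine_encoder T phi0 k ` seqs n) M2 (refine_encoder T phi0 k) phi2
           (\<lambda>l. psi (fst (prod_decode l)))"
  using assms finite_seqs unfolding wak_code_def by auto

lemma wak_error_unif_refine_encoder:
  "wak_error_unif (refine_encoder T phi0 k) phi2 (\<lambda>l. psi (fst (prod_decode l))) S =
   wak_error_unif phi0 phi2 psi S"
  by (simp add: wak_error_unif_def)

theorem lemma1:
  fixes n :: nat
    and M0 M2 :: "nat set"
    and phi0 :: "'x::finite list \<Rightarrow> nat" and phi2 :: "'y::finite list \<Rightarrow> nat"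
    and psi :: "nat \<Rightarrow> nat \<Rightarrow> 'y list"
    and P :: "'x \<times> 'y \<Rightarrow> real"
  assumes "n \<ge> 1"
    and "wak_code n M0 M2 phi0 phi2 psi"
    and "P \<in> joint_types n"
    and "log 2 (card (tclass n (marginal_x P))) \<ge> log 2 (card M0)"
  shows "\<exists>M0' M2' (phi0' :: 'x list \<Rightarrow> nat) (phi2' :: 'y list \<Rightarrow> nat) (psi' :: nat \<Rightarrow> nat \<Rightarrow> 'y list).
           wak_code n M0' M2' phi0' phi2' psi' \<and>
           log 2 (card M0') \<le> log 2 (card M0) + log 2 n + log 2 (log 2 (card (UNIV :: 'x set))) + 2 \<and>
           log 2 (card M2') = log 2 (card M2) \<and>
           wak_error_unif phi0' phi2' psi' (joint_type_class n P)
             \<le> wak_error_unif phi0 phi2 psi (joint_type_class n P) \<and>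
           (\<forall>m\<in>M0'. log 2 (card {xs \<in> tclass n (marginal_x P). phi0' xs = m})
              \<le> log 2 (real (card (tclass n (marginal_x P))) / real (card M0)))"
proof -
  let ?T = "tclass n (marginal_x P)"
  define phi0' where "phi0' = refine_encoder ?T phi0 (card ?T div card M0)"
  define psi' where "psi' l = psi (fst (prod_decode l))" for l
  have code: "finite M0" "phi0 ` seqs n \<subseteq> M0"
    using assms(2) by (auto simp: wak_code_def)
  then have M0_pos: "0 < card M0"
    using seqs_nonempty[of n] by (auto simp: card_gt_0_iff)
  have T_sub: "?T \<subseteq> seqs n" by (auto simp: tclass_def)
  then have T_fin: "finite ?T" using finite_seqs by (rule finite_subset)
  have "card (phi0' ` seqs n) \<le> card M0 + card ?T div (card ?T div card M0)"
    unfolding phi0'_def by (rule card_refine_encoder_image_le[OF code T_sub T_fin])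
  also have "\<dots> \<le> 4 * card M0"
    using div_div_less_double[OF M0_pos, of "card ?T"] by simp
  finally have "log 2 (card (phi0' ` seqs n)) \<le> log 2 (card M0) + 2"
    using M0_pos by (rule log2_le_log2_plus_2)
  moreover have "0 \<le> log 2 (real n)" using assms(1) by simp
  moreover note log2_log2_nonneg[of "card (UNIV :: 'x set)"]
  ultimately have rate: "log 2 (card (phi0' ` seqs n))
      \<le> log 2 (card M0) + log 2 n + log 2 (log 2 (card (UNIV :: 'x set))) + 2"
    by linarith
  have "wak_code n (phi0' ` seqs n) M2 phi0' phi2 psi'"
    unfolding phi0'_def psi'_def by (rule wak_code_refine_encoder[OF assms(2)])
  moreover have "wak_error_unif phi0' phi2 psi' S \<le> wak_error_unif phi0 phi2 psi S" for S
    unfolding phi0'_def psi'_def wak_error_unif_refine_encoder by (rule order_refl)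
  moreover have "\<forall>l\<in>phi0' ` seqs n. log 2 (card {xs \<in> ?T. phi0' xs = l})
      \<le> log 2 (real (card ?T) / real (card M0))"
    unfolding phi0'_def
    using log2_card_refine_encoder_fiber_le[OF T_fin M0_pos] assms(4) by simp
  ultimately show ?thesis using rate by blast
qed

end
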